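(* Let $0<\mu\le L$, $f\in\mathcal S^2_{\mu,L}(\mathbb R^n)$ with minimizer $x^*$, $\beta\in[0,1]$, $x_0\in\mathbb R^n$, and step size $0<s\le 1/L$. Let $X$ be the solution of the $\beta$-High Resolution ODE $$\ddot X+2\sqrt\mu\,\dot X+\beta\sqrt s\,\nabla^2 f(X)\dot X+(1+\sqrt{\mu s})\nabla f(X)=0,\quad X(0)=x_0,\ \dot X(0)=-\frac{2\sqrt s\,\nabla f(x_0)}{1+\sqrt{\mu s}}.$$ Then for all $t\ge0$, $$f(X(t))-f(x^* )\le\frac{3+(2-\beta)^2}{2s}\|x_0-x^*\|^2 e^{-\frac{\sqrt\mu}{4}t}.$$
   Context: $\mathcal S^2_{\mu,L}(\mathbb R^n)$ is the class of twice differentiable, $\mu$-strongly convex functions $f:\mathbb R^n\to\mathbb R$ (i.e. $f(y)\ge f(x)+\langle\nabla f(x),y-x\rangle+\frac\mu2\|y-x\|^2$) whose gradient is $L$-Lipschitz and whose Hessian is Lipschitz in Frobenius norm ($\|\nabla^2f(x)-\nabla^2f(y)\|_F\le L'\|x-y\|$ for some $L'>0$). *)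

theory Defs
  imports "HOL-Analysis.Analysis"
begin

text \<open>The gradient g and Hessian H of f are given
explicitly; they are uniquely determined by the derivative conditions.
The norm on real^'n^'n is the Euclidean norm of all entries, i.e. the
Frobenius norm.\<close>

definition S2_class ::
  "real \<Rightarrow> real \<Rightarrow> (real^'n \<Rightarrow> real) \<Rightarrow> (real^'n \<Rightarrow> real^'n)
   \<Rightarrow> (real^'n \<Rightarrow> real^'n^'n) \<Rightarrow> bool" where
  "S2_class mu L f g H \<longleftrightarrow>
     (\<forall>x. (f has_derivative (\<lambda>h. g x \<bullet> h)) (at x)) \<and>
     (\<forall>x. (g has_derivative (\<lambda>h. H x *v h)) (at x)) \<and>
     (\<forall>x y. f y \<ge> f x + g x \<bullet> (y - x) + mu / 2 * (norm (y - x))\<^sup>2) \<and>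
     (\<forall>x y. norm (g x - g y) \<le> L * norm (x - y)) \<and>
     (\<exists>L'>0. \<forall>x y. norm (H x - H y) \<le> L' * norm (x - y))"

end

theory Submission
  imports Defs
begin

(* Along the trajectory consider the Lyapunov function
     E = c (f(X) - f(xs)) + |X'|^2/4 + |X' + 2 sqrt mu (X - xs) + beta sqrt s grad f(X)|^2/4,
   with c = 1 + sqrt (mu s). Substituting the ODE, E' becomes
     - sqrt mu |X'|^2 - (beta sqrt s/2) <Hess f(X) X', X'> - c sqrt mu <grad f(X), X - xs>
     - (c beta sqrt s/2) |grad f(X)|^2,
   and strong convexity bounds every part of E by these terms, so E' <= -(sqrt mu/4) E and
   E(t) <= E(0) exp(-sqrt mu t/4). At t = 0 the prescribed velocity, L-smoothness and s <= 1/L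
   give E(0) <= c (3 + (2 - beta)^2)/(2 s) |x0 - xs|^2, and f(X) - f(xs) <= E/c. *)

lemma strongly_convex_gradient_monotone:
  fixes f :: "'a::real_inner \<Rightarrow> real"
  assumes "\<forall>x y. f y \<ge> f x + g x \<bullet> (y - x) + mu / 2 * (norm (y - x))\<^sup>2"
  shows "(g x - g y) \<bullet> (x - y) \<ge> mu * (norm (x - y))\<^sup>2"
proof -
  have "f y \<ge> f x - g x \<bullet> (x - y) + mu / 2 * (norm (x - y))\<^sup>2"
    using assms[rule_format, of x y] by (simp add: norm_minus_commute inner_diff_right)
  moreover have "f x \<ge> f y + g y \<bullet> (x - y) + mu / 2 * (norm (x - y))\<^sup>2"
    using assms by blast
  ultimately show ?thesis by (simp add: inner_diff_left)
qed

lemma gradient_eq_0_at_minimum: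
  fixes f :: "'a::real_inner \<Rightarrow> real"
  assumes "(f has_derivative (\<lambda>h. g \<bullet> h)) (at x)" and "\<forall>y. f x \<le> f y"
  shows "g = 0"
proof -
  have "(\<lambda>h. g \<bullet> h) = (\<lambda>h. 0)"
    using differential_zero_maxmin[of x UNIV f] assms by auto
  then show ?thesis by (metis inner_eq_zero_iff)
qed

lemma monotone_derivative_nonneg:
  fixes g :: "'a::real_inner \<Rightarrow> 'a"
  assumes deriv: "(g has_derivative g') (at x)"
    and mono: "\<forall>x y. (g x - g y) \<bullet> (x - y) \<ge> 0"
  shows "g' v \<bullet> v \<ge> 0"
proof (rule ccontr)
  assume "\<not> g' v \<bullet> v \<ge> 0"
  have "((\<lambda>h. x + h *\<^sub>R v) has_derivative (\<lambda>h. h *\<^sub>R v)) (at 0)"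
    by (auto intro!: derivative_eq_intros)
  from has_derivative_inner_left[OF has_derivative_compose[OF this, simplified, OF deriv]]
  have "((\<lambda>h. g (x + h *\<^sub>R v) \<bullet> v) has_derivative (\<lambda>h. g' (h *\<^sub>R v) \<bullet> v)) (at 0)" .
  moreover have "(\<lambda>h. g' (h *\<^sub>R v) \<bullet> v) = (*) (g' v \<bullet> v)"
    by (auto simp: linear_cmul[OF has_derivative_linear[OF deriv]])
  ultimately have "((\<lambda>h. g (x + h *\<^sub>R v) \<bullet> v) has_real_derivative g' v \<bullet> v) (at 0)"
    by (simp add: has_field_derivative_def)
  from DERIV_neg_dec_right[OF this] \<open>\<not> g' v \<bullet> v \<ge> 0\<close> obtain d where "d > 0"
    and d: "\<And>h. 0 < h \<Longrightarrow> h < d \<Longrightarrow> g (x + h *\<^sub>R v) \<bullet> v < g x \<bullet> v"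
    by auto
  have "0 \<le> (g (x + (d/2) *\<^sub>R v) - g x) \<bullet> ((d/2) *\<^sub>R v)"
    using mono by (metis add_diff_cancel_left')
  also have "\<dots> = d/2 * ((g (x + (d/2) *\<^sub>R v) - g x) \<bullet> v)" by simp
  also have "\<dots> < 0"
    using d[of "d/2"] \<open>d > 0\<close> by (simp add: mult_pos_neg inner_diff_left)
  finally show False by simp
qed

lemma lipschitz_gradient_upper_bound:
  fixes f :: "'a::real_inner \<Rightarrow> real"
  assumes deriv: "\<forall>x. (f has_derivative (\<lambda>h. g x \<bullet> h)) (at x)"
    and lip: "\<forall>x y. norm (g x - g y) \<le> L * norm (x - y)"
  shows "f y \<le> f x + g x \<bullet> (y - x) + L / 2 * (norm (y - x))\<^sup>2"
proof -
  define e where "e = y - x"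
  define \<psi> where "\<psi> t = f (x + t *\<^sub>R e) - t * (g x \<bullet> e) - L / 2 * t\<^sup>2 * (norm e)\<^sup>2" for t
  have line: "((\<lambda>t. x + t *\<^sub>R e) has_derivative (\<lambda>h. h *\<^sub>R e)) (at t)" for t
    by (auto intro!: derivative_eq_intros)
  have "((\<lambda>t. f (x + t *\<^sub>R e)) has_real_derivative g (x + t *\<^sub>R e) \<bullet> e) (at t)" for t
    using has_derivative_compose[OF line deriv[rule_format]]
    by (simp add: has_field_derivative_def mult_commute_abs)
  then have "(\<psi> has_real_derivative (g (x + t *\<^sub>R e) - g x) \<bullet> e - L * t * (norm e)\<^sup>2) (at t)" for t
    unfolding \<psi>_def by (auto intro!: derivative_eq_intros simp: inner_diff_left)
  moreover have "(g (x + t *\<^sub>R e) - g x) \<bullet> e - L * t * (norm e)\<^sup>2 \<le> 0" if "0 \<le> t" for t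
  proof -
    have "(g (x + t *\<^sub>R e) - g x) \<bullet> e \<le> norm (g (x + t *\<^sub>R e) - g x) * norm e"
      by (rule norm_cauchy_schwarz)
    also have "\<dots> \<le> L * (t * norm e) * norm e"
      using lip[rule_format, of "x + t *\<^sub>R e" x] that by (intro mult_right_mono) auto
    finally show ?thesis by (simp add: power2_eq_square mult.assoc)
  qed
  ultimately have "\<psi> 1 \<le> \<psi> 0"
    by (intro deriv_nonpos_imp_antimono[of 0 1 \<psi>]) auto
  then show ?thesis by (simp add: \<psi>_def e_def)
qed

lemma differential_inequality_exp_decay:
  fixes E E' :: "real \<Rightarrow> real"
  assumes deriv: "\<And>t. t \<ge> 0 \<Longrightarrow> (E has_real_derivative E' t) (at t within {0..})"
    and decay: "\<And>t. t \<ge> 0 \<Longrightarrow> E' t \<le> - k * E t"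
    and "t \<ge> 0"
  shows "E t \<le> E 0 * exp (- k * t)"
proof -
  define F where "F \<tau> = E \<tau> * exp (k * \<tau>)" for \<tau>
  have dF: "(F has_real_derivative (E' \<tau> + k * E \<tau>) * exp (k * \<tau>)) (at \<tau> within {0..})"
    if "\<tau> \<ge> 0" for \<tau>
    unfolding F_def using deriv[OF that] by (auto intro!: derivative_eq_intros simp: algebra_simps)
  have "F t \<le> F 0"
  proof (rule DERIV_nonpos_imp_decreasing_open[OF \<open>t \<ge> 0\<close>])
    fix \<tau> :: real assume "0 < \<tau>" "\<tau> < t"
    then have "at \<tau> within {0..} = at \<tau>" by (intro at_within_interior) auto
    moreover have "(E' \<tau> + k * E \<tau>) * exp (k * \<tau>) \<le> 0"
      using decay[of \<tau>] \<open>0 < \<tau>\<close> by (intro mult_nonpos_nonneg) auto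
    ultimately show "\<exists>y. (F has_real_derivative y) (at \<tau>) \<and> y \<le> 0"
      using dF[of \<tau>] \<open>0 < \<tau>\<close> by (metis less_eq_real_def)
  next
    show "continuous_on {0..t} F"
      by (rule DERIV_continuous_on, rule DERIV_subset[OF dF]) auto
  qed
  then show ?thesis by (simp add: F_def exp_minus field_simps)
qed

lemmas has_derivative_divide_const = bounded_linear.has_derivative[OF bounded_linear_divide]

(* E above is hr_lyapunov (1 + sqrt (mu s)) (2 sqrt mu) (beta sqrt s) f g xs X X'. *)
definition hr_lyapunov ::
  "real \<Rightarrow> real \<Rightarrow> real \<Rightarrow> ('a::real_inner \<Rightarrow> real) \<Rightarrow> ('a \<Rightarrow> 'a) \<Rightarrow> 'a \<Rightarrow> 'a \<Rightarrow> 'a \<Rightarrow> real"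
  where "hr_lyapunov c a b f g xs x v =
    c * (f x - f xs) + (norm v)\<^sup>2 / 4 + (norm (v + a *\<^sub>R (x - xs) + b *\<^sub>R g x))\<^sup>2 / 4"

lemma has_real_derivative_hr_lyapunov:
  fixes x v :: "real \<Rightarrow> 'a::real_inner"
  assumes f': "(f has_derivative (\<lambda>h. g (x t) \<bullet> h)) (at (x t))"
    and g': "(g has_derivative G) (at (x t))"
    and x': "(x has_vector_derivative x') (at t within S)"
    and v': "(v has_vector_derivative v') (at t within S)"
  shows "((\<lambda>\<tau>. hr_lyapunov c a b f g xs (x \<tau>) (v \<tau>)) has_real_derivative
      c * (g (x t) \<bullet> x') + v t \<bullet> v' / 2
      + (v t + a *\<^sub>R (x t - xs) + b *\<^sub>R g (x t)) \<bullet> (v' + a *\<^sub>R x' + b *\<^sub>R G x') / 2)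
    (at t within S)"
proof -
  define w where "w \<tau> = v \<tau> + a *\<^sub>R (x \<tau> - xs) + b *\<^sub>R g (x \<tau>)" for \<tau>
  have x1: "(x has_derivative (\<lambda>h. h *\<^sub>R x')) (at t within S)"
    using x' by (simp add: has_vector_derivative_def)
  have v1: "(v has_derivative (\<lambda>h. h *\<^sub>R v')) (at t within S)"
    using v' by (simp add: has_vector_derivative_def)
  have fx: "((\<lambda>\<tau>. f (x \<tau>)) has_derivative (\<lambda>h. h * (g (x t) \<bullet> x'))) (at t within S)"
    using has_derivative_compose[OF x1 f'] by simp
  have gx: "((\<lambda>\<tau>. g (x \<tau>)) has_derivative (\<lambda>h. h *\<^sub>R G x')) (at t within S)"
    using has_derivative_compose[OF x1 g'] by (simp add: linear_cmul[OF has_derivative_linear[OF g']])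
  have "(w has_derivative (\<lambda>h. h *\<^sub>R v' + a *\<^sub>R (h *\<^sub>R x' - 0) + b *\<^sub>R (h *\<^sub>R G x')))
      (at t within S)"
    unfolding w_def
    by (intro has_derivative_add has_derivative_scaleR_right has_derivative_diff x1 v1 gx
        has_derivative_const)
  then have w1: "(w has_derivative (\<lambda>h. h *\<^sub>R (v' + a *\<^sub>R x' + b *\<^sub>R G x'))) (at t within S)"
    by (simp add: algebra_simps)
  have "((\<lambda>\<tau>. c * (f (x \<tau>) - f xs) + v \<tau> \<bullet> v \<tau> / 4 + w \<tau> \<bullet> w \<tau> / 4) has_derivative
      (\<lambda>h. c * (h * (g (x t) \<bullet> x') - 0) + (v t \<bullet> (h *\<^sub>R v') + (h *\<^sub>R v') \<bullet> v t) / 4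
        + (w t \<bullet> (h *\<^sub>R (v' + a *\<^sub>R x' + b *\<^sub>R G x')) + (h *\<^sub>R (v' + a *\<^sub>R x' + b *\<^sub>R G x')) \<bullet> w t) / 4))
    (at t within S)"
    by (intro has_derivative_add has_derivative_mult_right has_derivative_diff has_derivative_divide_const
        has_derivative_inner fx v1 w1 has_derivative_const)
  then have "((\<lambda>\<tau>. c * (f (x \<tau>) - f xs) + v \<tau> \<bullet> v \<tau> / 4 + w \<tau> \<bullet> w \<tau> / 4) has_derivative
      (\<lambda>h. h * (c * (g (x t) \<bullet> x') + v t \<bullet> v' / 2 + w t \<bullet> (v' + a *\<^sub>R x' + b *\<^sub>R G x') / 2)))
    (at t within S)"
    by (rule has_derivative_eq_rhs) (simp add: fun_eq_iff inner_commute algebra_simps field_simps)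
  then show ?thesis
    by (simp add: hr_lyapunov_def w_def power2_norm_eq_inner has_field_derivative_def mult_commute_abs)
qed

lemma power2_norm_add3_le:
  fixes u v w :: "'a::real_normed_vector"
  shows "(norm (u + v + w))\<^sup>2 \<le> 3 * ((norm u)\<^sup>2 + (norm v)\<^sup>2 + (norm w)\<^sup>2)"
proof -
  have "norm (u + v + w) \<le> norm u + norm v + norm w"
    using norm_triangle_ineq[of "u + v" w] norm_triangle_ineq[of u v] by linarith
  then have "(norm (u + v + w))\<^sup>2 \<le> (norm u + norm v + norm w)\<^sup>2"
    by (simp add: power_mono)
  also have "\<dots> \<le> 3 * ((norm u)\<^sup>2 + (norm v)\<^sup>2 + (norm w)\<^sup>2)"
    using sum_squares_ge_zero[of "norm u - norm v" "norm v - norm w"]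
      zero_le_power2[of "norm u - norm w"]
    by (simp add: power2_eq_square algebra_simps)
  finally show ?thesis .
qed

(* Read V = |v|^2, Q = <w, v>, P = <x - xs, g x>, F = f x - f xs, N = |x - xs|^2, G = |g x|^2, and
   W = the square in the last term of hr_lyapunov. *)
lemma hr_lyapunov_decay_arith:
  fixes V Q P F N G W k \<sigma> \<beta> :: real
  assumes "V \<ge> 0" "Q \<ge> 0" "N \<ge> 0" "G \<ge> 0"
    and "F \<ge> k\<^sup>2 * N / 2" "P \<ge> F + k\<^sup>2 * N / 2"
    and "W \<le> 3 * (V + 4 * k\<^sup>2 * N + \<beta>\<^sup>2 * \<sigma>\<^sup>2 * G)"
    and "k > 0" "\<sigma> > 0" "k * \<sigma> \<le> 1" "0 \<le> \<beta>" "\<beta> \<le> 1"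
  shows "- k * V - \<beta> * \<sigma> * Q / 2 - (1 + k * \<sigma>) * k * P - (1 + k * \<sigma>) * \<beta> * \<sigma> * G / 2
     \<le> - (k / 4) * ((1 + k * \<sigma>) * F + V / 4 + W / 4)"
proof -
  define c where "c = 1 + k * \<sigma>"
  have "c \<ge> 1" using assms by (simp add: c_def)
  have "F \<ge> 0" using assms by (smt (verit) divide_nonneg_pos mult_nonneg_nonneg zero_le_power2)
  have "c * k * P \<ge> c * k * (F + k\<^sup>2 * N / 2)"
    using assms \<open>c \<ge> 1\<close> by (intro mult_left_mono) auto
  moreover have "c * k * F \<ge> k * F"
    using \<open>c \<ge> 1\<close> \<open>F \<ge> 0\<close> assms by (simp add: mult_right_mono)
  moreover have "k * F \<ge> k * (k\<^sup>2 * N / 2)" using assms by (intro mult_left_mono) auto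
  moreover have "c * k * (k\<^sup>2 * N / 2) \<ge> k * (k\<^sup>2 * N / 2)"
    using \<open>c \<ge> 1\<close> assms by (intro mult_right_mono) auto
  moreover have "k * W \<le> k * (3 * (V + 4 * k\<^sup>2 * N + \<beta>\<^sup>2 * \<sigma>\<^sup>2 * G))"
    using assms by (intro mult_left_mono) auto
  moreover have "k * (\<beta>\<^sup>2 * \<sigma>\<^sup>2 * G) \<le> \<beta> * \<sigma> * G"
  proof -
    have "k * (\<beta> * \<sigma>) \<le> 1"
      using assms by (smt (verit) mult.left_commute mult_left_le_one_le mult_nonneg_nonneg)
    then have "(k * (\<beta> * \<sigma>)) * (\<beta> * \<sigma> * G) \<le> 1 * (\<beta> * \<sigma> * G)"
      using assms by (intro mult_right_mono) auto
    then show ?thesis by (simp add: power2_eq_square algebra_simps)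
  qed
  moreover have "c * \<beta> * \<sigma> * G \<ge> \<beta> * \<sigma> * G"
    using mult_right_mono[OF \<open>c \<ge> 1\<close>, of "\<beta> * \<sigma> * G"] assms by (simp add: mult.assoc)
  moreover have "V * k \<ge> 0" "N * (k * k\<^sup>2) \<ge> 0" "G * (\<beta> * \<sigma>) \<ge> 0" "\<beta> * \<sigma> * Q \<ge> 0"
    using assms by auto
  ultimately show ?thesis
    unfolding c_def[symmetric] by (simp add: algebra_simps)
qed

lemma hr_lyapunov_derivative_le:
  fixes x v v' w xs :: "'a::real_inner"
  assumes conv: "\<forall>x y. f y \<ge> f x + g x \<bullet> (y - x) + k\<^sup>2 / 2 * (norm (y - x))\<^sup>2"
    and "g xs = 0" and "w \<bullet> v \<ge> 0"
    and "0 < k" "0 < \<sigma>" "k * \<sigma> \<le> 1" "0 \<le> \<beta>" "\<beta> \<le> 1"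
    and ode: "v' + (2 * k) *\<^sub>R v + (\<beta> * \<sigma>) *\<^sub>R w + (1 + k * \<sigma>) *\<^sub>R g x = 0"
  shows "(1 + k * \<sigma>) * (g x \<bullet> v) + v \<bullet> v' / 2
      + (v + (2 * k) *\<^sub>R (x - xs) + (\<beta> * \<sigma>) *\<^sub>R g x) \<bullet> (v' + (2 * k) *\<^sub>R v + (\<beta> * \<sigma>) *\<^sub>R w) / 2
    \<le> - (k / 4) * hr_lyapunov (1 + k * \<sigma>) (2 * k) (\<beta> * \<sigma>) f g xs x v"
proof -
  define c where "c = 1 + k * \<sigma>"
  define e where "e = x - xs"
  have v': "v' = - ((2 * k) *\<^sub>R v + (\<beta> * \<sigma>) *\<^sub>R w + c *\<^sub>R g x)"
    using ode unfolding c_def by (simp add: eq_neg_iff_add_eq_0 algebra_simps)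
  have "(1 + k * \<sigma>) * (g x \<bullet> v) + v \<bullet> v' / 2
      + (v + (2 * k) *\<^sub>R (x - xs) + (\<beta> * \<sigma>) *\<^sub>R g x) \<bullet> (v' + (2 * k) *\<^sub>R v + (\<beta> * \<sigma>) *\<^sub>R w) / 2
    = - k * (norm v)\<^sup>2 - \<beta> * \<sigma> * (w \<bullet> v) / 2 - c * k * (e \<bullet> g x) - c * \<beta> * \<sigma> * (norm (g x))\<^sup>2 / 2"
    unfolding v' c_def e_def[symmetric]
    by (simp add: power2_norm_eq_inner inner_add_left inner_add_right inner_diff_left inner_diff_right
        inner_commute field_simps)
  also have "\<dots> \<le> - (k / 4) * (c * (f x - f xs) + (norm v)\<^sup>2 / 4
      + (norm (v + (2 * k) *\<^sub>R e + (\<beta> * \<sigma>) *\<^sub>R g x))\<^sup>2 / 4)"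
    unfolding c_def
  proof (rule hr_lyapunov_decay_arith)
    show "f x - f xs \<ge> k\<^sup>2 * (norm e)\<^sup>2 / 2"
      using conv[rule_format, of xs x] \<open>g xs = 0\<close> by (simp add: e_def)
    show "e \<bullet> g x \<ge> f x - f xs + k\<^sup>2 * (norm e)\<^sup>2 / 2"
      using conv[rule_format, of x xs]
      by (simp add: e_def norm_minus_commute inner_diff_right inner_commute)
    show "(norm (v + (2 * k) *\<^sub>R e + (\<beta> * \<sigma>) *\<^sub>R g x))\<^sup>2
        \<le> 3 * ((norm v)\<^sup>2 + 4 * k\<^sup>2 * (norm e)\<^sup>2 + \<beta>\<^sup>2 * \<sigma>\<^sup>2 * (norm (g x))\<^sup>2)"
      using power2_norm_add3_le[of v "(2 * k) *\<^sub>R e" "(\<beta> * \<sigma>) *\<^sub>R g x"] assms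
      by (simp add: power_mult_distrib)
  qed (use assms in auto)
  finally show ?thesis
    by (simp add: hr_lyapunov_def c_def e_def)
qed

lemma power2_norm_add_le_of_inner_nonpos:
  fixes u v :: "'a::real_inner"
  assumes "u \<bullet> v \<le> 0"
  shows "(norm (u + v))\<^sup>2 \<le> (norm u)\<^sup>2 + (norm v)\<^sup>2"
  using assms by (simp add: power2_norm_eq_inner inner_add_left inner_add_right inner_commute)

(* Here F = f x0 - f xs, G = |g x0|^2, d = |x0 - xs| and W bounds the square in the last term of
   hr_lyapunov at time 0. *)
lemma hr_lyapunov_initial_arith:
  fixes F G W d k \<sigma> \<beta> :: real
  defines "c \<equiv> 1 + k * \<sigma>"
  assumes "\<sigma> ^ 4 * G \<le> d\<^sup>2" "\<sigma>\<^sup>2 * F \<le> d\<^sup>2 / 2"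
    and "W \<le> \<sigma>\<^sup>2 * (\<beta> - 2 / c)\<^sup>2 * G + 4 * k\<^sup>2 * d\<^sup>2"
    and "0 < k" "0 < \<sigma>" "k * \<sigma> \<le> 1" "0 \<le> \<beta>" "\<beta> \<le> 1" "0 \<le> G"
  shows "c * F + (2 * \<sigma> / c)\<^sup>2 * G / 4 + W / 4 \<le> c * ((3 + (2 - \<beta>)\<^sup>2) / (2 * \<sigma>\<^sup>2) * d\<^sup>2)"
proof -
  define a where "a = \<beta> - 2 / c"
  have "1 \<le> c" "c \<le> 2" using assms by (auto simp: c_def)
  have "a\<^sup>2 \<le> (2 - \<beta>)\<^sup>2"
  proof -
    have "1 \<le> 2 / c" "2 / c \<le> 2" using \<open>1 \<le> c\<close> \<open>c \<le> 2\<close> by (auto simp: field_simps)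
    then have "0 \<le> - a" "- a \<le> 2 - \<beta>" using \<open>\<beta> \<le> 1\<close> by (auto simp: a_def)
    then show ?thesis using power_mono[of "- a" "2 - \<beta>" 2] by simp
  qed
  have "\<sigma>\<^sup>2 * (c * F) \<le> c * d\<^sup>2 / 2"
    using mult_left_mono[OF assms(3), of c] \<open>1 \<le> c\<close> by (simp add: algebra_simps)
  moreover have "\<sigma>\<^sup>2 * ((2 * \<sigma> / c)\<^sup>2 * G / 4) \<le> d\<^sup>2"
  proof -
    have "\<sigma>\<^sup>2 * ((2 * \<sigma> / c)\<^sup>2 * G / 4) = \<sigma> ^ 4 * G / c\<^sup>2"
      by (simp add: power2_eq_square power4_eq_xxxx field_simps)
    also have "\<dots> \<le> \<sigma> ^ 4 * G"
      using divide_left_mono[of 1 "c\<^sup>2" "\<sigma> ^ 4 * G"] \<open>1 \<le> c\<close> \<open>0 \<le> G\<close> \<open>0 < \<sigma>\<close>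
      by (simp add: one_le_power)
    finally show ?thesis using assms(2) by simp
  qed
  moreover have "\<sigma>\<^sup>2 * (W / 4) \<le> (a\<^sup>2 * d\<^sup>2 + 4 * (c - 1) * d\<^sup>2) / 4"
  proof -
    have "\<sigma>\<^sup>2 * W \<le> a\<^sup>2 * (\<sigma> ^ 4 * G) + 4 * (k * \<sigma>)\<^sup>2 * d\<^sup>2"
      using mult_left_mono[OF assms(4), of "\<sigma>\<^sup>2"]
      by (simp add: a_def power2_eq_square power4_eq_xxxx algebra_simps)
    also have "\<dots> \<le> a\<^sup>2 * d\<^sup>2 + 4 * (c - 1) * d\<^sup>2"
    proof (intro add_mono mult_left_mono mult_right_mono)
      show "(k * \<sigma>)\<^sup>2 \<le> c - 1"
        using assms by (simp add: c_def power2_eq_square mult_le_cancel_left1)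
    qed (use assms in auto)
    finally show ?thesis by simp
  qed
  ultimately have "\<sigma>\<^sup>2 * (c * F + (2 * \<sigma> / c)\<^sup>2 * G / 4 + W / 4) \<le> c * d\<^sup>2 * (3 / 2 + a\<^sup>2 / 4)"
    using mult_right_mono[OF \<open>1 \<le> c\<close>, of "a\<^sup>2 * d\<^sup>2"] by (simp add: algebra_simps)
  also have "\<dots> \<le> c * d\<^sup>2 * ((3 + (2 - \<beta>)\<^sup>2) / 2)"
  proof (rule mult_left_mono)
    have "a\<^sup>2 \<le> 2 * (2 - \<beta>)\<^sup>2" using order_trans[OF \<open>a\<^sup>2 \<le> (2 - \<beta>)\<^sup>2\<close>] by simp
    then show "3 / 2 + a\<^sup>2 / 4 \<le> (3 + (2 - \<beta>)\<^sup>2) / 2" by (simp add: field_simps)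
  qed (use \<open>1 \<le> c\<close> in simp)
  also have "\<dots> = \<sigma>\<^sup>2 * (c * ((3 + (2 - \<beta>)\<^sup>2) / (2 * \<sigma>\<^sup>2) * d\<^sup>2))"
    using \<open>0 < \<sigma>\<close> by (simp add: field_simps)
  finally show ?thesis
    by (rule mult_left_le_imp_le) (use \<open>0 < \<sigma>\<close> in simp)
qed

lemma hr_lyapunov_initial_le:
  fixes x0 xs :: "'a::real_inner"
  assumes deriv: "\<forall>x. (f has_derivative (\<lambda>h. g x \<bullet> h)) (at x)"
    and conv: "\<forall>x y. f y \<ge> f x + g x \<bullet> (y - x) + k\<^sup>2 / 2 * (norm (y - x))\<^sup>2"
    and lip: "\<forall>x y. norm (g x - g y) \<le> L * norm (x - y)"
    and "g xs = 0" "0 < k" "0 < \<sigma>" "L * \<sigma>\<^sup>2 \<le> 1" "k * \<sigma> \<le> 1" "0 \<le> \<beta>" "\<beta> \<le> 1"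
  shows "hr_lyapunov (1 + k * \<sigma>) (2 * k) (\<beta> * \<sigma>) f g xs x0 (- (2 * \<sigma> / (1 + k * \<sigma>)) *\<^sub>R g x0)
    \<le> (1 + k * \<sigma>) * ((3 + (2 - \<beta>)\<^sup>2) / (2 * \<sigma>\<^sup>2) * (norm (x0 - xs))\<^sup>2)"
proof -
  define c where "c = 1 + k * \<sigma>"
  define e where "e = x0 - xs"
  have "1 \<le> c" "c \<le> 2" using assms by (auto simp: c_def)
  have "hr_lyapunov c (2 * k) (\<beta> * \<sigma>) f g xs x0 (- (2 * \<sigma> / c) *\<^sub>R g x0)
    = c * (f x0 - f xs) + (2 * \<sigma> / c)\<^sup>2 * (norm (g x0))\<^sup>2 / 4
      + (norm ((\<sigma> * (\<beta> - 2 / c)) *\<^sub>R g x0 + (2 * k) *\<^sub>R e))\<^sup>2 / 4"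
    unfolding hr_lyapunov_def e_def by (simp add: power_mult_distrib power_divide algebra_simps)
  also have "\<dots> \<le> c * ((3 + (2 - \<beta>)\<^sup>2) / (2 * \<sigma>\<^sup>2) * (norm e)\<^sup>2)"
    unfolding c_def
  proof (rule hr_lyapunov_initial_arith)
    (* The initial velocity makes the coefficient of g x0 nonpositive, which kills the cross term. *)
    have "0 \<le> k\<^sup>2 * (norm e)\<^sup>2" by simp
    also have "\<dots> \<le> g x0 \<bullet> e"
      using strongly_convex_gradient_monotone[OF conv, of x0 xs] \<open>g xs = 0\<close> by (simp add: e_def)
    finally have "0 \<le> g x0 \<bullet> e" .
    moreover have "1 \<le> 2 / c" using \<open>c \<le> 2\<close> \<open>1 \<le> c\<close> by (simp add: field_simps)
    with \<open>\<beta> \<le> 1\<close> have "\<beta> - 2 / c \<le> 0" by linarith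
    ultimately have "(\<beta> - 2 / c) * (\<sigma> * (2 * k) * (g x0 \<bullet> e)) \<le> 0"
      using assms by (intro mult_nonpos_nonneg) auto
    then have "((\<sigma> * (\<beta> - 2 / c)) *\<^sub>R g x0) \<bullet> ((2 * k) *\<^sub>R e) \<le> 0"
      by (simp add: algebra_simps)
    from power2_norm_add_le_of_inner_nonpos[OF this]
    show "(norm ((\<sigma> * (\<beta> - 2 / (1 + k * \<sigma>))) *\<^sub>R g x0 + (2 * k) *\<^sub>R e))\<^sup>2
      \<le> \<sigma>\<^sup>2 * (\<beta> - 2 / (1 + k * \<sigma>))\<^sup>2 * (norm (g x0))\<^sup>2 + 4 * k\<^sup>2 * (norm e)\<^sup>2"
      by (simp add: c_def power_mult_distrib)
  next
    have "\<sigma>\<^sup>2 * norm (g x0) \<le> \<sigma>\<^sup>2 * (L * norm e)"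
      using lip[rule_format, of x0 xs] \<open>g xs = 0\<close> by (simp add: e_def mult_left_mono)
    also have "\<dots> \<le> norm e"
      using mult_right_mono[OF \<open>L * \<sigma>\<^sup>2 \<le> 1\<close>, of "norm e"] by (simp add: algebra_simps)
    finally show "\<sigma> ^ 4 * (norm (g x0))\<^sup>2 \<le> (norm e)\<^sup>2"
      using power_mono[of "\<sigma>\<^sup>2 * norm (g x0)" "norm e" 2] by (simp add: power_mult_distrib)
  next
    have "f x0 - f xs \<le> L / 2 * (norm e)\<^sup>2"
      using lipschitz_gradient_upper_bound[OF deriv lip, of x0 xs] \<open>g xs = 0\<close> by (simp add: e_def)
    then have "\<sigma>\<^sup>2 * (f x0 - f xs) \<le> (L * \<sigma>\<^sup>2) * (norm e)\<^sup>2 / 2"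
      using mult_left_mono[of _ _ "\<sigma>\<^sup>2"] by (fastforce simp: algebra_simps)
    also have "\<dots> \<le> (norm e)\<^sup>2 / 2"
      using mult_right_mono[OF \<open>L * \<sigma>\<^sup>2 \<le> 1\<close>, of "(norm e)\<^sup>2"] by simp
    finally show "\<sigma>\<^sup>2 * (f x0 - f xs) \<le> (norm e)\<^sup>2 / 2" .
  qed (use assms in auto)
  finally show ?thesis by (simp add: c_def e_def)
qed

lemma hr_ode_objective_gap_le:
  fixes f :: "'a::real_inner \<Rightarrow> real" and X X' X'' :: "real \<Rightarrow> 'a"
  assumes deriv: "\<forall>x. (f has_derivative (\<lambda>h. g x \<bullet> h)) (at x)"
    and hess: "\<forall>x. (g has_derivative G x) (at x)"
    and conv: "\<forall>x y. f y \<ge> f x + g x \<bullet> (y - x) + k\<^sup>2 / 2 * (norm (y - x))\<^sup>2"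
    and "\<forall>x y. norm (g x - g y) \<le> L * norm (x - y)"
    and min: "\<forall>y. f xs \<le> f y"
    and "0 < k" "0 < \<sigma>" "L * \<sigma>\<^sup>2 \<le> 1" "k * \<sigma> \<le> 1" "0 \<le> \<beta>" "\<beta> \<le> 1"
    and X: "\<forall>t\<ge>0. (X has_vector_derivative X' t) (at t within {0..})"
    and X': "\<forall>t\<ge>0. (X' has_vector_derivative X'' t) (at t within {0..})"
    and "\<forall>t\<ge>0. X'' t + (2 * k) *\<^sub>R X' t + (\<beta> * \<sigma>) *\<^sub>R G (X t) (X' t)
      + (1 + k * \<sigma>) *\<^sub>R g (X t) = 0"
    and init: "X' 0 = - (2 * \<sigma> / (1 + k * \<sigma>)) *\<^sub>R g (X 0)"
    and "0 \<le> t"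
  shows "f (X t) - f xs \<le> (3 + (2 - \<beta>)\<^sup>2) / (2 * \<sigma>\<^sup>2) * (norm (X 0 - xs))\<^sup>2 * exp (- (k / 4) * t)"
proof -
  define c where "c = 1 + k * \<sigma>"
  define E where "E \<tau> = hr_lyapunov c (2 * k) (\<beta> * \<sigma>) f g xs (X \<tau>) (X' \<tau>)" for \<tau>
  define E' where "E' \<tau> = c * (g (X \<tau>) \<bullet> X' \<tau>) + X' \<tau> \<bullet> X'' \<tau> / 2
    + (X' \<tau> + (2 * k) *\<^sub>R (X \<tau> - xs) + (\<beta> * \<sigma>) *\<^sub>R g (X \<tau>))
      \<bullet> (X'' \<tau> + (2 * k) *\<^sub>R X' \<tau> + (\<beta> * \<sigma>) *\<^sub>R G (X \<tau>) (X' \<tau>)) / 2" for \<tau>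
  have "g xs = 0" using gradient_eq_0_at_minimum deriv min by blast
  have "c * (f (X t) - f xs) \<le> E t" by (simp add: E_def hr_lyapunov_def)
  also have "E t \<le> E 0 * exp (- (k / 4) * t)"
  proof (rule differential_inequality_exp_decay[OF _ _ \<open>0 \<le> t\<close>])
    fix \<tau> :: real assume "0 \<le> \<tau>"
    show "(E has_real_derivative E' \<tau>) (at \<tau> within {0..})"
      unfolding E_def E'_def
      using deriv hess X X' \<open>0 \<le> \<tau>\<close> by (intro has_real_derivative_hr_lyapunov) auto
    have "\<forall>x y. (g x - g y) \<bullet> (x - y) \<ge> 0"
      using strongly_convex_gradient_monotone[OF conv] by (meson order_trans zero_le_mult_iff zero_le_power2)
    then have "G (X \<tau>) (X' \<tau>) \<bullet> X' \<tau> \<ge> 0"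
      using monotone_derivative_nonneg hess by blast
    then show "E' \<tau> \<le> - (k / 4) * E \<tau>"
      unfolding E_def E'_def c_def
      using assms \<open>g xs = 0\<close> \<open>0 \<le> \<tau>\<close> by (intro hr_lyapunov_derivative_le) auto
  qed
  also have "E 0 * exp (- (k / 4) * t)
      \<le> c * ((3 + (2 - \<beta>)\<^sup>2) / (2 * \<sigma>\<^sup>2) * (norm (X 0 - xs))\<^sup>2) * exp (- (k / 4) * t)"
    unfolding E_def c_def init
    using assms \<open>g xs = 0\<close> by (intro mult_right_mono hr_lyapunov_initial_le) auto
  finally have "c * (f (X t) - f xs)
      \<le> c * ((3 + (2 - \<beta>)\<^sup>2) / (2 * \<sigma>\<^sup>2) * (norm (X 0 - xs))\<^sup>2 * exp (- (k / 4) * t))"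
    by (simp add: mult.assoc)
  then show ?thesis
    by (rule mult_left_le_imp_le) (use \<open>0 < k\<close> \<open>0 < \<sigma>\<close> in \<open>simp add: c_def add_pos_pos\<close>)
qed

theorem theorem4p1:
  fixes f :: "real^'n \<Rightarrow> real" and g :: "real^'n \<Rightarrow> real^'n"
    and H :: "real^'n \<Rightarrow> real^'n^'n"
    and X X' X'' :: "real \<Rightarrow> real^'n"
    and mu L beta s :: real and x0 xs :: "real^'n"
  assumes "0 < mu" and "mu \<le> L"
    and "S2_class mu L f g H"
    and "\<forall>y. f xs \<le> f y"
    and "0 \<le> beta" and "beta \<le> 1"
    and "0 < s" and "s \<le> 1 / L"
    and "\<forall>t\<ge>0. (X has_vector_derivative X' t) (at t within {0..})"
    and "\<forall>t\<ge>0. (X' has_vector_derivative X'' t) (at t within {0..})"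
    and "\<forall>t\<ge>0. X'' t + (2 * sqrt mu) *\<^sub>R X' t + (beta * sqrt s) *\<^sub>R (H (X t) *v X' t)
                 + (1 + sqrt (mu * s)) *\<^sub>R g (X t) = 0"
    and "X 0 = x0"
    and "X' 0 = - ((2 * sqrt s) / (1 + sqrt (mu * s))) *\<^sub>R g x0"
  shows "\<forall>t\<ge>0. f (X t) - f xs
           \<le> (3 + (2 - beta)\<^sup>2) / (2 * s) * (norm (x0 - xs))\<^sup>2 * exp (- (sqrt mu / 4) * t)"
proof (intro allI impI)
  fix t :: real assume "0 \<le> t"
  from \<open>S2_class mu L f g H\<close>
  have "\<forall>x. (f has_derivative (\<lambda>h. g x \<bullet> h)) (at x)"
    and "\<forall>x. (g has_derivative (\<lambda>h. H x *v h)) (at x)"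
    and "\<forall>x y. f y \<ge> f x + g x \<bullet> (y - x) + mu / 2 * (norm (y - x))\<^sup>2"
    and "\<forall>x y. norm (g x - g y) \<le> L * norm (x - y)"
    unfolding S2_class_def by blast+
  moreover have "L * s \<le> 1" using assms by (simp add: field_simps)
  moreover have "sqrt mu * sqrt s \<le> 1"
  proof -
    have "mu * s \<le> L * s" using \<open>mu \<le> L\<close> \<open>0 < s\<close> by simp
    with \<open>L * s \<le> 1\<close> have "mu * s \<le> 1" by linarith
    then show ?thesis by (simp flip: real_sqrt_mult)
  qed
  ultimately have "f (X t) - f xs \<le> (3 + (2 - beta)\<^sup>2) / (2 * (sqrt s)\<^sup>2) * (norm (X 0 - xs))\<^sup>2
      * exp (- (sqrt mu / 4) * t)"
    using assms \<open>0 \<le> t\<close>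
    by (intro hr_ode_objective_gap_le[where G = "\<lambda>x h. H x *v h" and L = L and X = X and X' = X'
        and X'' = X'']) (auto simp: real_sqrt_mult)
  then show "f (X t) - f xs
           \<le> (3 + (2 - beta)\<^sup>2) / (2 * s) * (norm (x0 - xs))\<^sup>2 * exp (- (sqrt mu / 4) * t)"
    using assms by simp
qed

end
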